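(* Let $\mathcal{T}=(X,\mathcal{B},\mathcal{G})$ be a $\mathrm{TD}_\lambda(\ell,s)$ and let $q=p^e$ with $p$ prime. If $p\nmid \lambda s$, then $$\mathrm{Code}_q(\mathcal{T})\subseteq\{c\in\mathbb{F}_q^{X}:\ \text{for every } G\in\mathcal{G},\ c_{|G}\in\mathrm{Rep}(s)\},$$ where $\mathrm{Rep}(s)$ is the repetition code of length $s$ (i.e. $c$ is constant on each group). In particular, if $p\nmid\lambda s$ then $\dim_{\mathbb{F}_q}\mathrm{Code}_q(\mathcal{T})\le\ell$.
   Context: A transversal design $\mathrm{TD}_\lambda(\ell,s)$ ($s,\ell\ge2$, $\lambda\ge1$) is a triple $(X,\mathcal{B},\mathcal{G})$ where $X$ is a finite set of points, $\mathcal{B}$ a collection of subsets of $X$ (blocks), and $\mathcal{G}=\{G_1,\dots,G_\ell\}$ a partition of $X$ (groups) such that $|X|=\ell s$, every group has size $s$, every block has size $\ell$, and every unordered pair of distinct points of $X$ is contained either in one group and no block, or in no group and exactly $\lambda$ blocks. For a block design $(X,\mathcal{B})$, $\mathrm{Code}_q$ of the design is the $\mathbb{F}_q$-linear code $\{c\in\mathbb{F}_q^X:\ \sum_{x\in B}c_x=0\ \forall B\in\mathcal{B}\}$. For $c\in\mathbb{F}_q^X$ and $T\subseteq X$, $c_{|T}=(c_t)_{t\in T}$. *)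

theory Defs
  imports Complex_Main "HOL-Library.Multiset" "HOL-Library.Disjoint_Sets" "HOL-Library.FuncSet" "HOL-Library.Function_Algebras"
          "HOL-Computational_Algebra.Primes"
begin

definition transversal_design ::
  "nat \<Rightarrow> nat \<Rightarrow> nat \<Rightarrow> 'x set \<Rightarrow> 'x set multiset \<Rightarrow> 'x set set \<Rightarrow> bool" where
  "transversal_design lam l s X B G \<longleftrightarrow>
     s \<ge> 2 \<and> l \<ge> 2 \<and> lam \<ge> 1 \<and>
     finite X \<and> card X = l * s \<and>
     partition_on X G \<and> card G = l \<and> (\<forall>g\<in>G. card g = s) \<and>
     (\<forall>b\<in>#B. b \<subseteq> X \<and> card b = l) \<and>
     (\<forall>x\<in>X. \<forall>y\<in>X. x \<noteq> y \<longrightarrow>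
        ((\<exists>g\<in>G. x \<in> g \<and> y \<in> g) \<and> size (filter_mset (\<lambda>b. x \<in> b \<and> y \<in> b) B) = 0) \<or>
        (\<not> (\<exists>g\<in>G. x \<in> g \<and> y \<in> g) \<and> size (filter_mset (\<lambda>b. x \<in> b \<and> y \<in> b) B) = lam))"

text \<open>F_q^X is represented as functions vanishing outside X.\<close>
definition design_code :: "'x set \<Rightarrow> 'x set multiset \<Rightarrow> ('x \<Rightarrow> 'a::field) set" where
  "design_code X B = {c. (\<forall>x. x \<notin> X \<longrightarrow> c x = 0) \<and> (\<forall>b\<in>#B. (\<Sum>x\<in>b. c x) = 0)}"

definition rep_code :: "'x set \<Rightarrow> ('x \<Rightarrow> 'a) set" where
  "rep_code T = {v \<in> extensional T. \<exists>a. \<forall>t\<in>T. v t = a}"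

abbreviation fscale :: "'a::field \<Rightarrow> ('x \<Rightarrow> 'a) \<Rightarrow> ('x \<Rightarrow> 'a)" where
  "fscale c f \<equiv> (\<lambda>x. c * f x)"

end

theory Submission
  imports Defs "HOL-Number_Theory.Residues"
begin

text \<open>Summing the block equations over the blocks through a point x counts x itself
  r_x times, the other points of its group never, and every point outside that group
  exactly \<open>\<lambda>\<close> times. Taking all coordinates equal to 1 gives r_x = \<open>\<lambda>s\<close>, so a codeword c
  satisfies \<open>\<lambda>s\<close> c(x) + \<open>\<lambda>\<close> (sum of c outside the group) = 0. The second term depends only on
  the group, and \<open>\<lambda>s\<close> is invertible in a field of characteristic p when p does not divide it;
  hence c is constant on groups, and such vectors are spanned by the l group indicators.\<close>

lemma CHAR_eq_prime_if_card_prime_power: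
  assumes "prime p" and "card (UNIV :: 'a::{field,finite} set) = p ^ e"
  shows "CHAR('a) = p"
proof -
  have "prime CHAR('a)"
    by (intro prime_CHAR_semidom finite_imp_CHAR_pos) simp
  moreover have "CHAR('a) dvd p ^ e"
    using CHAR_dvd_CARD[where 'a='a] assms(2) by simp
  ultimately have "CHAR('a) dvd p"
    using prime_dvd_power by blast
  with \<open>prime CHAR('a)\<close> assms(1) show ?thesis
    by (simp add: primes_dvd_imp_eq)
qed

lemma sum_mset_sum_eq_sum_replication:
  fixes f :: "'x \<Rightarrow> 'b::comm_semiring_1"
  assumes "\<forall>b\<in>#B. b \<subseteq> X" and "finite X"
  shows "(\<Sum>b\<in>#B. \<Sum>z\<in>b. f z) = (\<Sum>z\<in>X. of_nat (size (filter_mset (\<lambda>b. z \<in> b) B)) * f z)"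
  using assms(1)
proof (induction B)
  case empty
  then show ?case by simp
next
  case (add b B)
  have "(\<Sum>z\<in>b. f z) = (\<Sum>z\<in>X. if z \<in> b then f z else 0)"
    using add.prems assms(2) by (simp add: sum.inter_restrict[symmetric] Int_absorb1)
  moreover have "(\<Sum>z\<in>X. of_nat (size (filter_mset (\<lambda>c. z \<in> c) (add_mset b B))) * f z)
      = (\<Sum>z\<in>X. if z \<in> b then f z else 0) + (\<Sum>z\<in>X. of_nat (size (filter_mset (\<lambda>c. z \<in> c) B)) * f z)"
    unfolding sum.distrib[symmetric] by (rule sum.cong) (auto simp: algebra_simps)
  ultimately show ?case
    using add by simp
qed

lemma partition_on_part_unique:
  assumes "partition_on X G" "g \<in> G" "g' \<in> G" "x \<in> g" "x \<in> g'"
  shows "g = g'"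
  using disjointD[OF partition_onD2[OF assms(1)] assms(2,3)] assms(4,5) by blast

lemma transversal_design_pair_count:
  assumes TD: "transversal_design lam l s X B G"
    and g: "g \<in> G" "x \<in> g" and z: "z \<in> X" "z \<noteq> x"
  shows "size (filter_mset (\<lambda>b. x \<in> b \<and> z \<in> b) B) = (if z \<in> g then 0 else lam)"
proof -
  have part: "partition_on X G"
    and pairs: "\<forall>x\<in>X. \<forall>y\<in>X. x \<noteq> y \<longrightarrow>
        ((\<exists>g\<in>G. x \<in> g \<and> y \<in> g) \<and> size (filter_mset (\<lambda>b. x \<in> b \<and> y \<in> b) B) = 0) \<or>
        (\<not> (\<exists>g\<in>G. x \<in> g \<and> y \<in> g) \<and> size (filter_mset (\<lambda>b. x \<in> b \<and> y \<in> b) B) = lam)"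
    using TD unfolding transversal_design_def by blast+
  have "x \<in> X"
    using partition_onD1[OF part] g by blast
  have "((\<exists>g'\<in>G. x \<in> g' \<and> z \<in> g') \<and> size (filter_mset (\<lambda>b. x \<in> b \<and> z \<in> b) B) = 0) \<or>
      (\<not> (\<exists>g'\<in>G. x \<in> g' \<and> z \<in> g') \<and> size (filter_mset (\<lambda>b. x \<in> b \<and> z \<in> b) B) = lam)"
    using pairs[rule_format, OF \<open>x \<in> X\<close> z(1) z(2)[symmetric]] .
  moreover have "(\<exists>g'\<in>G. x \<in> g' \<and> z \<in> g') \<longleftrightarrow> z \<in> g"
    using partition_on_part_unique[OF part] g by blast
  ultimately show ?thesis
    by argo
qed

lemma transversal_design_sum_blocks_through_point:
  fixes f :: "'x \<Rightarrow> 'b::comm_semiring_1"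
  assumes TD: "transversal_design lam l s X B G" and g: "g \<in> G" "x \<in> g"
  shows "(\<Sum>b\<in>#filter_mset (\<lambda>b. x \<in> b) B. \<Sum>z\<in>b. f z)
     = of_nat (size (filter_mset (\<lambda>b. x \<in> b) B)) * f x + of_nat lam * (\<Sum>z\<in>X - g. f z)"
proof -
  have fin: "finite X" and blocks: "\<forall>b\<in>#B. b \<subseteq> X" and part: "partition_on X G"
    using TD unfolding transversal_design_def by auto
  have gX: "g \<subseteq> X"
    using partition_onD1[OF part] g(1) by blast
  define cnt where "cnt z = size (filter_mset (\<lambda>b. x \<in> b \<and> z \<in> b) B)" for z
  have "(\<Sum>b\<in>#filter_mset (\<lambda>b. x \<in> b) B. \<Sum>z\<in>b. f z) = (\<Sum>z\<in>X. of_nat (cnt z) * f z)"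
    unfolding cnt_def filter_filter_mset[symmetric]
    by (rule sum_mset_sum_eq_sum_replication) (use blocks fin in auto)
  also have "\<dots> = of_nat (cnt x) * f x + (\<Sum>z\<in>g - {x}. of_nat (cnt z) * f z)
                    + (\<Sum>z\<in>X - g. of_nat (cnt z) * f z)"
    using sum.subset_diff[OF gX fin] sum.remove[OF finite_subset[OF gX fin] g(2)]
    by (metis (no_types, lifting) add.commute)
  also have "(\<Sum>z\<in>g - {x}. of_nat (cnt z) * f z) = 0"
    using transversal_design_pair_count[OF TD g] subsetD[OF gX] unfolding cnt_def
    by (intro sum.neutral) auto
  also have "(\<Sum>z\<in>X - g. of_nat (cnt z) * f z) = (\<Sum>z\<in>X - g. of_nat lam * f z)"
    using transversal_design_pair_count[OF TD g] g(2) unfolding cnt_def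
    by (intro sum.cong) fastforce+
  also have "cnt x = size (filter_mset (\<lambda>b. x \<in> b) B)"
    unfolding cnt_def by simp
  finally show ?thesis
    by (simp add: sum_distrib_left)
qed

lemma transversal_design_replication_number:
  assumes TD: "transversal_design lam l s X B G" and g: "g \<in> G" "x \<in> g"
  shows "size (filter_mset (\<lambda>b. x \<in> b) B) = lam * s"
proof -
  have fin: "finite X" and l2: "l \<ge> 2" and cX: "card X = l * s" and cg: "card g = s"
    and part: "partition_on X G" and blocks: "\<forall>b\<in>#B. card b = l"
    using TD g(1) unfolding transversal_design_def by auto
  have gX: "g \<subseteq> X"
    using partition_onD1[OF part] g(1) by blast
  define r where "r = size (filter_mset (\<lambda>b. x \<in> b) B)"
  have "(\<Sum>b\<in>#filter_mset (\<lambda>b. x \<in> b) B. \<Sum>z\<in>b. (1::nat)) = r * l"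
    unfolding r_def using blocks by (induction B) auto
  moreover have "card (X - g) = (l - 1) * s"
    using card_Diff_subset[OF finite_subset[OF gX fin] gX] cX cg by (simp add: diff_mult_distrib)
  ultimately have "r * l = r + lam * ((l - 1) * s)"
    using transversal_design_sum_blocks_through_point[OF TD g, of "\<lambda>_. 1::nat"]
    unfolding r_def by simp
  then have "r * (l - 1) = lam * s * (l - 1)"
    using l2 by (cases l) (auto simp: algebra_simps)
  then show ?thesis
    using l2 unfolding r_def by simp
qed

lemma transversal_design_code_constant_on_group:
  fixes c :: "'x \<Rightarrow> 'a::field"
  assumes TD: "transversal_design lam l s X B G"
    and char: "\<not> CHAR('a) dvd lam * s"
    and c: "c \<in> design_code X B" and g: "g \<in> G" "x \<in> g" "y \<in> g"
  shows "c x = c y"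
proof -
  have block_sums: "\<forall>b\<in>#B. (\<Sum>z\<in>b. c z) = 0"
    using c unfolding design_code_def by blast
  have point_eq: "of_nat (lam * s) * c u = - (of_nat lam * (\<Sum>z\<in>X - g. c z))" if "u \<in> g" for u
  proof -
    have "(\<Sum>b\<in>#filter_mset (\<lambda>b. u \<in> b) B. \<Sum>z\<in>b. c z) = 0"
      using block_sums by (induction B) auto
    then show ?thesis
      using transversal_design_sum_blocks_through_point[OF TD g(1) that, of c]
        transversal_design_replication_number[OF TD g(1) that]
      by (simp add: eq_neg_iff_add_eq_0)
  qed
  have "(of_nat (lam * s) :: 'a) \<noteq> 0"
    using char of_nat_eq_0_iff_char_dvd by blast
  moreover have "of_nat (lam * s) * c x = of_nat (lam * s) * c y"
    using point_eq[OF g(2)] point_eq[OF g(3)] by (simp only:)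
  ultimately show ?thesis
    by simp
qed

lemma transversal_design_code_subset_repetition:
  assumes TD: "transversal_design lam l s X B G"
    and char: "\<not> CHAR('a::field) dvd lam * s"
  shows "design_code X B \<subseteq>
    {c :: 'x \<Rightarrow> 'a. (\<forall>x. x \<notin> X \<longrightarrow> c x = 0) \<and> (\<forall>g\<in>G. restrict c g \<in> rep_code g)}"
proof (intro subsetI CollectI conjI ballI)
  fix c :: "'x \<Rightarrow> 'a" and g
  assume c: "c \<in> design_code X B"
  then show "\<forall>x. x \<notin> X \<longrightarrow> c x = 0"
    by (simp add: design_code_def)
  assume g: "g \<in> G"
  moreover have "partition_on X G"
    using TD unfolding transversal_design_def by blast
  ultimately have "g \<noteq> {}"
    using partition_onD3 by blast
  then obtain y where "y \<in> g"
    by blast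
  then have "\<forall>t\<in>g. restrict c g t = c y"
    using transversal_design_code_constant_on_group[OF TD char c g] by (metis restrict_apply')
  then show "restrict c g \<in> rep_code g"
    unfolding rep_code_def using restrict_extensional by blast
qed

lemma sum_apply: "sum f A x = (\<Sum>a\<in>A. f a x)"
  by (induction A rule: infinite_finite_induct) auto

lemma vector_space_fscale: "vector_space (fscale :: 'a::field \<Rightarrow> ('x \<Rightarrow> 'a) \<Rightarrow> _)"
  by unfold_locales (auto simp: algebra_simps fun_eq_iff)

lemma dim_le_card_if_constant_on_parts:
  fixes V :: "('x \<Rightarrow> 'a::field) set"
  assumes part: "partition_on X G" and finG: "finite G"
    and V: "V \<subseteq> {c. (\<forall>x. x \<notin> X \<longrightarrow> c x = 0) \<and> (\<forall>g\<in>G. restrict c g \<in> rep_code g)}"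
  shows "vector_space.dim (fscale :: 'a \<Rightarrow> ('x \<Rightarrow> 'a) \<Rightarrow> _) V \<le> card G"
proof -
  interpret vector_space "fscale :: 'a \<Rightarrow> ('x \<Rightarrow> 'a) \<Rightarrow> _"
    by (rule vector_space_fscale)
  define ind where "ind g = (\<lambda>x. if x \<in> g then (1::'a) else 0)" for g :: "'x set"
  have "c \<in> span (ind ` G)" if "c \<in> V" for c
  proof -
    have zero: "\<forall>x. x \<notin> X \<longrightarrow> c x = 0"
      and const: "\<forall>g\<in>G. \<exists>a. \<forall>t\<in>g. c t = a"
      using V that unfolding rep_code_def by auto
    have "c = (\<Sum>g\<in>G. fscale (c (SOME t. t \<in> g)) (ind g))"
    proof
      fix x
      show "c x = (\<Sum>g\<in>G. fscale (c (SOME t. t \<in> g)) (ind g)) x"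
      proof (cases "x \<in> X")
        case True
        then obtain g where g: "g \<in> G" "x \<in> g"
          using partition_onD1[OF part] by blast
        have "x \<in> g' \<longleftrightarrow> g' = g" if "g' \<in> G" for g'
          using partition_on_part_unique[OF part that g(1)] g(2) by blast
        then have "(\<Sum>g'\<in>G. fscale (c (SOME t. t \<in> g')) (ind g')) x
            = (\<Sum>g'\<in>G. if g' = g then c (SOME t. t \<in> g') else 0)"
          unfolding sum_apply by (intro sum.cong refl) (simp add: ind_def)
        also have "\<dots> = c (SOME t. t \<in> g)"
          using finG g(1) by simp
        also have "\<dots> = c x"
          using const g by (metis someI)
        finally show ?thesis
          by (rule sym)
      next
        case False
        then show ?thesis
          using zero partition_onD1[OF part] by (auto simp: ind_def sum_apply)
      qed
    qed
    also have "\<dots> \<in> span (ind ` G)"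
      by (intro span_sum span_scale span_base) auto
    finally show ?thesis .
  qed
  then have "dim V \<le> card (ind ` G)"
    using dim_le_card finG by blast
  also have "\<dots> \<le> card G"
    using card_image_le[OF finG] .
  finally show ?thesis .
qed

theorem mainTheorem2:
  fixes X :: "'x set" and B :: "'x set multiset" and G :: "'x set set"
    and lam l s p e :: nat
  assumes TD: "transversal_design lam l s X B G"
    and q: "prime p" "card (UNIV :: 'a set) = p ^ e"
    and ndvd: "\<not> p dvd lam * s"
  shows "design_code X B \<subseteq>
           {c :: 'x \<Rightarrow> 'a::{field,finite}. (\<forall>x. x \<notin> X \<longrightarrow> c x = 0) \<and> (\<forall>g\<in>G. restrict c g \<in> rep_code g)}
         \<and> vector_space.dim (fscale :: 'a \<Rightarrow> ('x \<Rightarrow> 'a) \<Rightarrow> _) (design_code X B :: ('x \<Rightarrow> 'a) set) \<le> l"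
proof -
  have part: "partition_on X G" and finG: "finite G" and "card G = l"
    using TD finite_elements unfolding transversal_design_def by auto
  have "\<not> CHAR('a) dvd lam * s"
    using CHAR_eq_prime_if_card_prime_power[OF q] ndvd by simp
  then have subset: "design_code X B \<subseteq>
      {c :: 'x \<Rightarrow> 'a. (\<forall>x. x \<notin> X \<longrightarrow> c x = 0) \<and> (\<forall>g\<in>G. restrict c g \<in> rep_code g)}"
    by (rule transversal_design_code_subset_repetition[OF TD])
  then show ?thesis
    using dim_le_card_if_constant_on_parts[OF part finG subset] unfolding \<open>card G = l\<close>
    by (rule conjI)
qed

end
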